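(* Let $R$ be a finite commutative ring and let $C\subseteq R^n$ be a (not necessarily linear) code with $|C|\ge 2$, locality $r\ge 1$, minimum distance $d$, and let $\kappa$ be the minimum size of an information set of $C$. Then $$d\le n-\kappa-\left\lceil\frac{\kappa}{r}\right\rceil+2 \qquad\text{and}\qquad \frac{\kappa}{n}\le\frac{r}{r+1}.$$
   Context: For $S\subseteq\{1,\dots,n\}$, $C_S$ denotes the punctured code obtained by keeping only the coordinates in $S$. $S$ is an information set if $|C_S|=|C|$; $\kappa$ is the minimum cardinality of an information set. A coordinate $i$ has locality $r$ if there is $S_i\subseteq\{1,\dots,n\}\setminus\{i\}$ with $|S_i|\le r$ and $|C_{S_i}|=|C_{S_i\cup\{i\}}|$ (a recovering set for $i$). $C$ has locality $r$ if every coordinate has locality $r$. $d$ is the minimum Hamming distance between distinct codewords. *)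

theory Defs
  imports Complex_Main "HOL-Library.FuncSet"
begin

definition words :: "nat \<Rightarrow> (nat \<Rightarrow> 'a) set" where
  "words n = PiE {1..n} (\<lambda>_. UNIV)"

definition punct :: "(nat \<Rightarrow> 'a) set \<Rightarrow> nat set \<Rightarrow> (nat \<Rightarrow> 'a) set" where
  "punct C S = (\<lambda>c. restrict c S) ` C"

definition info_set :: "nat \<Rightarrow> (nat \<Rightarrow> 'a) set \<Rightarrow> nat set \<Rightarrow> bool" where
  "info_set n C S \<longleftrightarrow> S \<subseteq> {1..n} \<and> card (punct C S) = card C"

definition kappa :: "nat \<Rightarrow> (nat \<Rightarrow> 'a) set \<Rightarrow> nat" where
  "kappa n C = (LEAST k. \<exists>S. info_set n C S \<and> card S = k)"

definition recovering_set :: "nat \<Rightarrow> (nat \<Rightarrow> 'a) set \<Rightarrow> nat \<Rightarrow> nat set \<Rightarrow> bool" where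
  "recovering_set n C i Si \<longleftrightarrow> Si \<subseteq> {1..n} - {i} \<and> card (punct C Si) = card (punct C (insert i Si))"

definition coord_locality :: "nat \<Rightarrow> (nat \<Rightarrow> 'a) set \<Rightarrow> nat \<Rightarrow> nat \<Rightarrow> bool" where
  "coord_locality n C r i \<longleftrightarrow> (\<exists>Si. recovering_set n C i Si \<and> card Si \<le> r)"

definition has_locality :: "nat \<Rightarrow> (nat \<Rightarrow> 'a) set \<Rightarrow> nat \<Rightarrow> bool" where
  "has_locality n C r \<longleftrightarrow> (\<forall>i\<in>{1..n}. coord_locality n C r i)"

definition hamming :: "nat \<Rightarrow> (nat \<Rightarrow> 'a) \<Rightarrow> (nat \<Rightarrow> 'a) \<Rightarrow> nat" where
  "hamming n x y = card {i\<in>{1..n}. x i \<noteq> y i}"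

definition min_dist :: "nat \<Rightarrow> (nat \<Rightarrow> 'a) set \<Rightarrow> nat" where
  "min_dist n C = Min {hamming n x y | x y. x \<in> C \<and> y \<in> C \<and> x \<noteq> y}"

end

theory Submission
  imports Defs
begin

text \<open>Grow a set A of coordinates together with a set S \<supseteq> A of coordinates that A determines on C.
  In each round pick a coordinate i outside S, add its recovering set to A (at most r new coordinates)
  and i to S, so that S gains one coordinate more than A. As long as |A| < \<kappa>, two distinct codewords
  agree on A and hence on S, so d \<le> n - |S|; after \<lceil>\<kappa>/r\<rceil> - 1 rounds, with A padded to \<kappa> - 1
  coordinates, this is the distance bound. Running the rounds until S covers all coordinates turns A
  into an information set with |A| + |A|/r \<le> n, which is the rate bound.\<close>

definition determines :: "('i \<Rightarrow> 'a) set \<Rightarrow> 'i set \<Rightarrow> 'i set \<Rightarrow> bool" where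
  "determines C A S \<longleftrightarrow> (\<forall>c\<in>C. \<forall>c'\<in>C. (\<forall>j\<in>A. c j = c' j) \<longrightarrow> (\<forall>j\<in>S. c j = c' j))"

definition determined_extension :: "nat \<Rightarrow> (nat \<Rightarrow> 'a) set \<Rightarrow> nat set \<Rightarrow> nat set \<Rightarrow> nat \<Rightarrow> bool" where
  "determined_extension n C A S t \<longleftrightarrow>
     A \<subseteq> S \<and> S \<subseteq> {1..n} \<and> determines C A S \<and> card S = card A + t"

lemma finite_words: "finite (words n :: (nat \<Rightarrow> 'a::finite) set)"
  unfolding words_def by (intro finite_PiE) auto

lemma words_eqI:
  assumes "c \<in> words n" "c' \<in> words n" "\<forall>j\<in>{1..n}. c j = c' j"
  shows "c = c'"
  using assms unfolding words_def by (metis PiE_ext)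

lemma info_set_all:
  assumes "C \<subseteq> words n"
  shows "info_set n C {1..n}"
proof -
  have "restrict c {1..n} = c" if "c \<in> C" for c
    using that assms unfolding words_def by (auto simp: PiE_iff extensional_restrict)
  then have "punct C {1..n} = C"
    unfolding punct_def by simp
  then show ?thesis
    unfolding info_set_def by simp
qed

lemma kappa_le_card_if_separating:
  assumes "A \<subseteq> {1..n}" and "\<forall>c\<in>C. \<forall>c'\<in>C. (\<forall>j\<in>A. c j = c' j) \<longrightarrow> c = c'"
  shows "kappa n C \<le> card A"
proof -
  have "inj_on (\<lambda>c. restrict c A) C"
    using assms(2) by (intro inj_onI) (metis restrict_apply')
  then have "info_set n C A"
    using assms(1) unfolding info_set_def punct_def by (simp add: card_image)
  then show ?thesis
    unfolding kappa_def by (intro Least_le) blast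
qed

lemma exists_distinct_agreeing:
  assumes "A \<subseteq> {1..n}" and "card A < kappa n C"
  shows "\<exists>c\<in>C. \<exists>c'\<in>C. c \<noteq> c' \<and> (\<forall>j\<in>A. c j = c' j)"
proof (rule ccontr)
  assume "\<not> ?thesis"
  then have "kappa n C \<le> card A"
    using kappa_le_card_if_separating[OF assms(1)] by blast
  then show False
    using assms(2) by simp
qed

lemma kappa_le_card_if_determines_all:
  assumes "C \<subseteq> words n" and "A \<subseteq> {1..n}" and "determines C A {1..n}"
  shows "kappa n C \<le> card A"
proof (rule kappa_le_card_if_separating[OF assms(2)], intro ballI impI)
  fix c c' assume "c \<in> C" "c' \<in> C" "\<forall>j\<in>A. c j = c' j"
  then show "c = c'"
    using assms(1,3) unfolding determines_def by (blast intro: words_eqI)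
qed

lemma kappa_pos:
  assumes "C \<subseteq> words n" and "card C \<ge> 2"
  shows "kappa n C > 0"
proof (rule ccontr)
  assume "\<not> kappa n C > 0"
  moreover have "\<exists>S. info_set n C S \<and> card S = kappa n C"
    unfolding kappa_def by (rule LeastI_ex) (use info_set_all[OF assms(1)] in blast)
  ultimately obtain S where S: "info_set n C S" "card S = 0"
    by auto
  then have "S = {}"
    unfolding info_set_def by (metis card_0_eq finite_atLeastAtMost finite_subset)
  moreover have "C \<noteq> {}"
    using assms(2) by auto
  then have "punct C {} = {\<lambda>_. undefined}"
    unfolding punct_def by (auto simp: restrict_def)
  ultimately show False
    using S(1) assms(2) unfolding info_set_def by simp
qed

lemma recovering_set_determines:
  assumes "finite C" and "recovering_set n C i R"
  shows "determines C R {i}"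
  unfolding determines_def
proof (intro ballI impI)
  fix c c' j
  assume c: "c \<in> C" "c' \<in> C" and agree: "\<forall>j\<in>R. c j = c' j" and j: "j \<in> {i}"
  have restrict_punct: "punct C R = (\<lambda>x. restrict x R) ` punct C (insert i R)"
    unfolding punct_def image_image by (intro image_cong) (auto simp: fun_eq_iff)
  \<comment> \<open>Restricting C_{R \<union> {i}} to R is onto C_R and preserves cardinality, hence it is injective.\<close>
  have "inj_on (\<lambda>x. restrict x R) (punct C (insert i R))"
    using assms restrict_punct unfolding recovering_set_def punct_def
    by (metis eq_card_imp_inj_on finite_imageI)
  moreover have "restrict (restrict c (insert i R)) R = restrict (restrict c' (insert i R)) R"
    using agree by (auto simp: fun_eq_iff)
  ultimately have "restrict c (insert i R) = restrict c' (insert i R)"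
    using c unfolding punct_def inj_on_def by blast
  then show "c j = c' j"
    using j by (metis insertI1 restrict_apply' singletonD)
qed

lemma determined_extension_step:
  assumes ext: "determined_extension n C A S t" and "S \<noteq> {1..n}"
    and loc: "has_locality n C r" and "finite C"
  shows "\<exists>A' S'. determined_extension n C A' S' (Suc t) \<and> card A' \<le> card A + r"
proof -
  from ext have AS: "A \<subseteq> S" and Sn: "S \<subseteq> {1..n}" and det: "determines C A S"
    and card_S: "card S = card A + t"
    unfolding determined_extension_def by auto
  obtain i where i: "i \<in> {1..n}" "i \<notin> S"
    using assms(2) Sn by blast
  obtain R where R: "recovering_set n C i R" "card R \<le> r"
    using loc i unfolding has_locality_def coord_locality_def by blast
  have Rn: "R \<subseteq> {1..n} - {i}"
    using R(1) unfolding recovering_set_def by simp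
  have fin: "finite S" "finite R" "finite A"
    using Sn Rn AS by (auto intro: finite_subset)
  define A' where "A' = A \<union> (R - S)"
  define S' where "S' = insert i (S \<union> R)"
  have card_A': "card A' = card A + card (R - S)"
    unfolding A'_def using AS fin by (subst card_Un_disjoint) auto
  have "card (S \<union> R) = card S + card (R - S)"
    using card_Un_disjoint[of S "R - S"] fin by simp
  then have "card S' = card S + card (R - S) + 1"
    unfolding S'_def using i Rn fin by (subst card_insert_disjoint) auto
  then have "card S' = card A' + Suc t"
    using card_A' card_S by simp
  moreover have "determines C A' S'"
    unfolding determines_def
  proof (intro ballI impI)
    fix c c' j
    assume c: "c \<in> C" "c' \<in> C" and agree: "\<forall>j\<in>A'. c j = c' j" and j: "j \<in> S'"
    have on_S: "\<forall>j\<in>S. c j = c' j"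
      using det c agree unfolding determines_def A'_def by blast
    have on_R: "\<forall>j\<in>R. c j = c' j"
      using on_S agree unfolding A'_def by blast
    have "c i = c' i"
      using recovering_set_determines[OF \<open>finite C\<close> R(1)] c on_R unfolding determines_def by blast
    then show "c j = c' j"
      using j on_S on_R unfolding S'_def by blast
  qed
  moreover have "A' \<subseteq> S'" "S' \<subseteq> {1..n}"
    using AS Sn i Rn unfolding A'_def S'_def by auto
  ultimately have "determined_extension n C A' S' (Suc t)"
    unfolding determined_extension_def by blast
  moreover have "card (R - S) \<le> r"
    using R(2) fin by (meson card_mono Diff_subset le_trans)
  ultimately show ?thesis
    using card_A' by auto
qed

lemma greedy_determined_extension:
  assumes "has_locality n C r" and "finite C"
  shows "(\<exists>A S. determined_extension n C A S t \<and> card A \<le> t * r) \<or>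
         (\<exists>A t'. t' \<le> t \<and> determined_extension n C A {1..n} t' \<and> card A \<le> t' * r)"
proof (induction t)
  case 0
  have "determined_extension n C {} {} 0"
    unfolding determined_extension_def determines_def by simp
  then show ?case by auto
next
  case (Suc t)
  then show ?case
  proof
    assume "\<exists>A S. determined_extension n C A S t \<and> card A \<le> t * r"
    then obtain A S where ext: "determined_extension n C A S t" and card_A: "card A \<le> t * r"
      by blast
    show ?case
    proof (cases "S = {1..n}")
      case True
      then show ?thesis using ext card_A by auto
    next
      case False
      then obtain A' S' where "determined_extension n C A' S' (Suc t)" "card A' \<le> card A + r"
        using determined_extension_step[OF ext _ assms] by blast
      then show ?thesis using card_A by auto
    qed
  qed (auto intro: le_SucI)
qed

lemma determined_extension_pad:
  assumes ext: "determined_extension n C A S t" and "card A \<le> k" and "k < kappa n C"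
    and words: "C \<subseteq> words n"
  shows "\<exists>A' S'. determined_extension n C A' S' t \<and> card A' = k"
proof -
  have "\<exists>A' S'. determined_extension n C A' S' t \<and> card A' = card A + m"
    if "card A + m < kappa n C" for m
    using that
  proof (induction m)
    case 0
    then show ?case using ext by auto
  next
    case (Suc m)
    then obtain A' S' where ext': "determined_extension n C A' S' t" and card_A': "card A' = card A + m"
      by auto
    then have A'S': "A' \<subseteq> S'" "S' \<subseteq> {1..n}" "determines C A' S'" "card S' = card A' + t"
      unfolding determined_extension_def by auto
    have "S' \<noteq> {1..n}"
    proof
      assume "S' = {1..n}"
      then have "kappa n C \<le> card A'"
        using kappa_le_card_if_determines_all[OF words] A'S' by blast
      then show False
        using Suc.prems card_A' by simp
    qed
    then obtain x where x: "x \<in> {1..n}" "x \<notin> S'"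
      using A'S'(2) by blast
    have fin: "finite S'" "finite A'"
      using A'S' by (auto intro: finite_subset)
    have "x \<notin> A'"
      using x(2) A'S'(1) by blast
    then have card_insert: "card (insert x A') = Suc (card A')" "card (insert x S') = Suc (card S')"
      using fin x(2) by simp_all
    have "determines C (insert x A') (insert x S')"
      using A'S'(3) unfolding determines_def by blast
    then have "determined_extension n C (insert x A') (insert x S') t"
      unfolding determined_extension_def using A'S' x(1) card_insert by auto
    moreover have "card (insert x A') = card A + Suc m"
      using card_insert card_A' by simp
    ultimately show ?case by blast
  qed
  from this[of "k - card A"] show ?thesis
    using assms(2,3) by simp
qed

lemma min_dist_le_card_compl:
  assumes "finite C" "x \<in> C" "y \<in> C" "x \<noteq> y" "S \<subseteq> {1..n}" "\<forall>j\<in>S. x j = y j"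
  shows "min_dist n C \<le> n - card S"
proof -
  have "finite {hamming n x y | x y. x \<in> C \<and> y \<in> C \<and> x \<noteq> y}"
    using assms(1) by (auto intro: finite_subset[of _ "(\<lambda>(x, y). hamming n x y) ` (C \<times> C)"])
  then have "min_dist n C \<le> hamming n x y"
    unfolding min_dist_def using assms(2-4) by (intro Min_le) auto
  also have "\<dots> \<le> card ({1..n} - S)"
    unfolding hamming_def using assms(6) by (intro card_mono) auto
  also have "\<dots> = n - card S"
    using assms(5) by (simp add: card_Diff_subset finite_subset)
  finally show ?thesis .
qed

lemma ceiling_divide_pred_mult_less:
  fixes k r :: nat
  assumes "r > 0" and "k > 0"
  shows "\<lceil>real k / real r\<rceil> \<ge> 1" and "nat (\<lceil>real k / real r\<rceil> - 1) * r < k"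
proof -
  show c: "\<lceil>real k / real r\<rceil> \<ge> 1"
    using assms by (simp add: le_ceiling_iff)
  have "real_of_int \<lceil>real k / real r\<rceil> < real k / real r + 1"
    by linarith
  then have "real_of_int (\<lceil>real k / real r\<rceil> - 1) * real r < real k"
    using assms by (simp add: field_simps)
  then show "nat (\<lceil>real k / real r\<rceil> - 1) * r < k"
    using c by (metis of_int_of_nat_eq of_nat_less_iff of_nat_mult nat_0_le diff_ge_0_iff_ge)
qed

lemma distance_bound:
  assumes fin: "finite C" and words: "C \<subseteq> words n" and card_C: "card C \<ge> 2"
    and "r \<ge> 1" and loc: "has_locality n C r"
  shows "int (min_dist n C) \<le> int n - int (kappa n C) - \<lceil>real (kappa n C) / real r\<rceil> + 2"
proof -
  define k where "k = kappa n C"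
  define t where "t = nat (\<lceil>real k / real r\<rceil> - 1)"
  have "k > 0"
    unfolding k_def using kappa_pos[OF words card_C] .
  then have ceil: "\<lceil>real k / real r\<rceil> \<ge> 1" and tr: "t * r < k"
    unfolding t_def using ceiling_divide_pred_mult_less[of r k] \<open>r \<ge> 1\<close> by auto
  have "\<not> determined_extension n C A {1..n} t'" if "t' \<le> t" "card A \<le> t' * r" for A t'
  proof
    assume "determined_extension n C A {1..n} t'"
    then have "k \<le> card A"
      unfolding k_def determined_extension_def using kappa_le_card_if_determines_all[OF words] by blast
    moreover have "t' * r \<le> t * r"
      using that(1) by (rule mult_right_mono) simp
    ultimately show False
      using that(2) tr by linarith
  qed
  then obtain A S where ext: "determined_extension n C A S t" and "card A \<le> t * r"
    using greedy_determined_extension[OF loc fin, of t] by blast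
  then have "card A \<le> k - 1"
    using tr by linarith
  moreover have "k - 1 < kappa n C"
    using \<open>k > 0\<close> unfolding k_def by simp
  ultimately obtain A' S' where "determined_extension n C A' S' t" and "card A' = k - 1"
    using determined_extension_pad[OF ext _ _ words] by blast
  then have A'S': "A' \<subseteq> {1..n}" "S' \<subseteq> {1..n}" "determines C A' S'" "card S' = k - 1 + t"
    and "card A' < kappa n C"
    using \<open>k - 1 < kappa n C\<close> unfolding determined_extension_def by auto
  then obtain x y where xy: "x \<in> C" "y \<in> C" "x \<noteq> y" "\<forall>j\<in>A'. x j = y j"
    using exists_distinct_agreeing by blast
  then have "\<forall>j\<in>S'. x j = y j"
    using A'S'(3) unfolding determines_def by blast
  then have "min_dist n C \<le> n - card S'"
    using min_dist_le_card_compl[OF fin xy(1-3) A'S'(2)] by simp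
  moreover have "card S' \<le> n"
    using card_mono[OF _ A'S'(2)] by simp
  ultimately show ?thesis
    using A'S'(4) ceil \<open>k > 0\<close> unfolding t_def k_def by linarith
qed

lemma rate_bound:
  assumes fin: "finite C" and words: "C \<subseteq> words n" and loc: "has_locality n C r"
  shows "real (kappa n C) / real n \<le> real r / (real r + 1)"
proof -
  have "\<not> determined_extension n C A S (Suc n)" for A S
  proof
    assume "determined_extension n C A S (Suc n)"
    then have "S \<subseteq> {1..n}" "card S = card A + Suc n"
      unfolding determined_extension_def by auto
    then show False
      using card_mono[of "{1..n}" S] by simp
  qed
  then obtain A t where "determined_extension n C A {1..n} t" and card_A: "card A \<le> t * r"
    using greedy_determined_extension[OF loc fin, of "Suc n"] by blast
  then have "kappa n C \<le> card A" and n: "n = card A + t"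
    using kappa_le_card_if_determines_all[OF words] unfolding determined_extension_def by auto
  then have "kappa n C * (r + 1) \<le> n * r"
    using card_A by (simp add: algebra_simps add_mono)
  then have "real (kappa n C) * (real r + 1) \<le> real n * real r"
    by (metis of_nat_1 of_nat_add of_nat_le_iff of_nat_mult)
  then show ?thesis
    using \<open>kappa n C \<le> card A\<close> n by (cases "n = 0") (auto simp: divide_simps mult.commute)
qed

theorem mainTheorem2:
  fixes C :: "(nat \<Rightarrow> 'a::{comm_ring,finite}) set" and n r :: nat
  assumes "C \<subseteq> words n"
    and "card C \<ge> 2"
    and "r \<ge> 1"
    and "has_locality n C r"
  shows "int (min_dist n C) \<le> int n - int (kappa n C) - \<lceil>real (kappa n C) / real r\<rceil> + 2 \<and>
         real (kappa n C) / real n \<le> real r / (real r + 1)"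
proof -
  have "finite C"
    using finite_subset[OF assms(1) finite_words] .
  then show ?thesis
    using distance_bound[OF _ assms] rate_bound[OF _ assms(1,4)] by blast
qed

end
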